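(* There exists a sequence $\{f_n\}_{n\ge1}\subset W^{1,\infty}(\mathbb{T}^2)$ of zero-average functions, bounded in $L^1(\mathbb{T}^2)$, and a constant $C>0$ such that $$\sup_{n\ge1}\mathbb{M}_{f_n}(r)\le\frac{C}{\sqrt{|\log r|}}\qquad\forall r\in\left(0,\tfrac12\right),$$ and $$\lim_{n\to\infty}\|f_n\|_{L^2}=\infty,\qquad 0<\liminf_{n\to\infty}S_n\le\limsup_{n\to\infty}S_n<\infty,\qquad\text{where } S_n:=\frac{\|f_n\|_{L^2}^2\sqrt[4]{\log\|\nabla f_n\|_{L^2}}}{\|\nabla f_n\|_{L^2}}.$$
   Context: $\mathbb{T}^2$ is the two-dimensional flat torus. For $f\in L^1(\mathbb{T}^2)$, $\mathbb{M}_f(r):=\sup_{x\in\mathbb{T}^2}\int_{B_r(x)}|f(y)|\,dy$, where $B_r(x)$ is the ball of radius $r$ in $\mathbb{T}^2$. *)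

theory Defs
  imports "HOL-Analysis.Analysis"
begin

text \<open>Functions on T^2 are
  represented as Z^2-periodic functions on R^2 = real \<times> real; integrals over
  T^2 are integrals over the fundamental domain [0,1]^2.\<close>

definition torus_periodic :: "(real \<times> real \<Rightarrow> 'b) \<Rightarrow> bool" where
  "torus_periodic f \<longleftrightarrow> (\<forall>a b. f (a + 1, b) = f (a, b) \<and> f (a, b + 1) = f (a, b))"

definition unit_square :: "(real \<times> real) set" where
  "unit_square = cbox (0, 0) (1, 1)"

text \<open>f in W^{1,infinity}(T^2) with (weak = a.e. classical) gradient g:
  f is periodic and Lipschitz, g is periodic and Borel measurable, and
  f is differentiable with gradient g x at almost every x.\<close>
definition W1inf_torus :: "(real \<times> real \<Rightarrow> real) \<Rightarrow> (real \<times> real \<Rightarrow> real \<times> real) \<Rightarrow> bool" where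
  "W1inf_torus f g \<longleftrightarrow> torus_periodic f \<and> torus_periodic g \<and>
     (\<exists>L. L\<ge>0 \<and> lipschitz_on L UNIV f) \<and>
     g \<in> borel_measurable lborel \<and>
     (AE x in lborel. (f has_derivative (\<lambda>h. g x \<bullet> h)) (at x))"

definition torus_L1 :: "(real \<times> real \<Rightarrow> real) \<Rightarrow> real" where
  "torus_L1 f = (LINT x:unit_square|lborel. \<bar>f x\<bar>)"

definition torus_L2 :: "(real \<times> real \<Rightarrow> real) \<Rightarrow> real" where
  "torus_L2 f = sqrt (LINT x:unit_square|lborel. (f x)\<^sup>2)"

definition torus_grad_L2 :: "(real \<times> real \<Rightarrow> real \<times> real) \<Rightarrow> real" where
  "torus_grad_L2 g = sqrt (LINT x:unit_square|lborel. (norm (g x))\<^sup>2)"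

text \<open>M_f(r) = sup_x \<integral>_{B_r(x)} |f|. For r < 1/2 the Euclidean ball of radius r
  projects injectively onto the torus ball, so for periodic f this equals the
  integral over the torus ball.\<close>
definition torusM :: "(real \<times> real \<Rightarrow> real) \<Rightarrow> real \<Rightarrow> real" where
  "torusM f r = (SUP x. (LINT y:ball x r|lborel. \<bar>f y\<bar>))"

end

theory Submission
  imports Defs
begin

(*
  Let u(x) = tent(N x), where the 1-periodic tent has height 1/d, half-width d and unit
  mass per period, and put f(x, y) = u(x) u(y) - 1.  Then f has mean zero and L^1 norm at
  most 2, while ||f||_2^2 = (2/(3d))^2 - 1 and ||grad f||_2 = sqrt(8/3) N / d^2.  An
  interval of length 2r carries u-mass at most min(2r/d, 2r + 2/N), so a disc of radius r
  carries |f|-mass at most the square of this plus 4r^2.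

  With d = exp(-N^4)/2 the quantity log ||grad f||_2 is comparable to N^4, which keeps S_N
  between two constants.  The disc bound is at most 25/sqrt|log r| for every N: for
  r >= d/N one has |log r| <= log(N/d) <= 4 N^4 and uses 2r + 2/N, while for r < d/N one
  writes r = t d/N with t < 1 and uses 2r/d = 2t/N.
*)

section \<open>The periodic tent\<close>

definition dist_int :: "real \<Rightarrow> real" where
  "dist_int t = min (frac t) (1 - frac t)"

lemma dist_int_nonneg: "0 \<le> dist_int t"
  unfolding dist_int_def using frac_lt_1[of t] by simp

lemma dist_int_le: "dist_int t \<le> \<bar>t - of_int k\<bar>"
proof -
  have "k \<le> \<lfloor>t\<rfloor> \<or> \<lfloor>t\<rfloor> + 1 \<le> k" by linarith
  then have "real_of_int k \<le> of_int \<lfloor>t\<rfloor> \<or> of_int \<lfloor>t\<rfloor> + 1 \<le> real_of_int k"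
    by (metis of_int_le_iff of_int_add of_int_1)
  then show ?thesis unfolding dist_int_def frac_def by linarith
qed

lemma dist_int_attained: "\<exists>k::int. dist_int t = \<bar>t - of_int k\<bar>"
proof (cases "frac t \<le> 1 - frac t")
  case True
  then have "dist_int t = \<bar>t - of_int \<lfloor>t\<rfloor>\<bar>" by (simp add: dist_int_def frac_def)
  then show ?thesis ..
next
  case False
  then have "dist_int t = \<bar>t - of_int (\<lfloor>t\<rfloor> + 1)\<bar>" by (simp add: dist_int_def frac_def)
  then show ?thesis ..
qed

lemma dist_int_lipschitz: "\<bar>dist_int x - dist_int y\<bar> \<le> \<bar>x - y\<bar>"
proof -
  obtain k l where "dist_int x = \<bar>x - of_int k\<bar>" "dist_int y = \<bar>y - of_int l\<bar>"
    using dist_int_attained by metis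
  with dist_int_le[of x l] dist_int_le[of y k] show ?thesis by linarith
qed

definition tent :: "real \<Rightarrow> real \<Rightarrow> real" where
  "tent d t = max 0 ((d - dist_int t) / d\<^sup>2)"

definition tent_deriv :: "real \<Rightarrow> real \<Rightarrow> real" where
  "tent_deriv d t = (if frac t < d then - 1 / d\<^sup>2 else if 1 - d < frac t then 1 / d\<^sup>2 else 0)"

lemma tent_add_of_int: "tent d (t + of_int k) = tent d t"
  unfolding tent_def dist_int_def by simp

lemma tent_deriv_add_of_int: "tent_deriv d (t + of_int k) = tent_deriv d t"
  unfolding tent_deriv_def by simp

lemma tent_nonneg: "0 \<le> tent d t"
  unfolding tent_def by simp

lemma tent_le:
  assumes "0 < d"
  shows "tent d t \<le> 1 / d"
proof -
  have "(d - dist_int t) / d\<^sup>2 \<le> d / d\<^sup>2"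
    using dist_int_nonneg[of t] by (simp add: divide_right_mono)
  then show ?thesis
    using assms by (simp add: tent_def power2_eq_square)
qed

lemma tent_lipschitz: "\<bar>tent d x - tent d y\<bar> \<le> \<bar>x - y\<bar> / d\<^sup>2"
proof -
  have "\<bar>tent d x - tent d y\<bar> \<le> \<bar>(d - dist_int x) / d\<^sup>2 - (d - dist_int y) / d\<^sup>2\<bar>"
    unfolding tent_def by (auto split: split_max)
  also have "\<dots> = \<bar>dist_int x - dist_int y\<bar> / d\<^sup>2"
    by (simp add: diff_divide_distrib[symmetric] abs_minus_commute)
  also have "\<dots> \<le> \<bar>x - y\<bar> / d\<^sup>2"
    by (simp add: dist_int_lipschitz divide_right_mono)
  finally show ?thesis .
qed

lemma tent_deriv_bound: "0 < d \<Longrightarrow> \<bar>tent_deriv d t\<bar> \<le> 1 / d\<^sup>2"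
  unfolding tent_deriv_def by simp

context
  fixes d :: real
  assumes d: "0 < d" "d < 1/2"
begin

lemma tent_left: "t \<in> {0..d} \<Longrightarrow> tent d t = (d - t) / d\<^sup>2"
  using d by (simp add: tent_def dist_int_def)

lemma tent_middle: "t \<in> {d..1-d} \<Longrightarrow> tent d t = 0"
  using d by (simp add: tent_def dist_int_def divide_nonpos_pos)

lemma tent_right: "t \<in> {1-d..1} \<Longrightarrow> tent d t = (t - 1 + d) / d\<^sup>2"
  using d by (cases "t = 1") (simp_all add: tent_def dist_int_def)

end

lemma has_real_derivative_affine_near:
  fixes f :: "real \<Rightarrow> real"
  assumes "open S" "t \<in> S" "\<And>x. x \<in> S \<Longrightarrow> f x = a * x + b"
  shows "(f has_real_derivative a) (at t)"
proof -
  have "((\<lambda>x. a * x + b) has_real_derivative a) (at t)"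
    by (auto intro!: derivative_eq_intros)
  then show ?thesis
    by (rule has_field_derivative_transform_within_open[OF _ assms(1,2)]) (simp add: assms(3))
qed

lemma tent_has_real_derivative:
  assumes d: "0 < d" "d < 1/2" and t: "frac t \<notin> {0, d, 1 - d}"
  shows "(tent d has_real_derivative tent_deriv d t) (at t)"
proof -
  define k where "k = real_of_int \<lfloor>t\<rfloor>"
  have shift: "tent d x = tent d (x - k)" for x
    using tent_add_of_int[of d "x - k" "\<lfloor>t\<rfloor>"] by (simp add: k_def)
  have frac_t: "frac t = t - k"
    by (simp add: k_def frac_def)
  consider "frac t < d" | "d < frac t" "frac t < 1 - d" | "1 - d < frac t"
    using t by force
  then show ?thesis
  proof cases
    case 1
    have "(tent d has_real_derivative - 1 / d\<^sup>2) (at t)"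
    proof (rule has_real_derivative_affine_near[where S="{k<..<k + d}" and b="(d + k) / d\<^sup>2"])
      fix x assume "x \<in> {k<..<k + d}"
      then have "tent d x = (d - (x - k)) / d\<^sup>2"
        using shift[of x] tent_left[OF d, of "x - k"] by simp
      then show "tent d x = - 1 / d\<^sup>2 * x + (d + k) / d\<^sup>2"
        by (simp add: diff_divide_distrib add_divide_distrib)
    qed (use 1 frac_t frac_ge_0[of t] t in auto)
    then show ?thesis using 1 by (simp add: tent_deriv_def)
  next
    case 2
    have "(tent d has_real_derivative 0) (at t)"
    proof (rule has_real_derivative_affine_near[where S="{k + d<..<k + 1 - d}" and b=0])
      fix x assume "x \<in> {k + d<..<k + 1 - d}"
      then show "tent d x = 0 * x + 0"
        using shift[of x] tent_middle[OF d, of "x - k"] by simp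
    qed (use 2 frac_t in auto)
    then show ?thesis using 2 by (simp add: tent_deriv_def)
  next
    case 3
    have "(tent d has_real_derivative 1 / d\<^sup>2) (at t)"
    proof (rule has_real_derivative_affine_near[where S="{k + 1 - d<..<k + 1}" and b="(d - 1 - k) / d\<^sup>2"])
      fix x assume "x \<in> {k + 1 - d<..<k + 1}"
      then have "tent d x = (x - k - 1 + d) / d\<^sup>2"
        using shift[of x] tent_right[OF d, of "x - k"] by simp
      then show "tent d x = 1 / d\<^sup>2 * x + (d - 1 - k) / d\<^sup>2"
        by (simp add: diff_divide_distrib add_divide_distrib)
    qed (use 3 frac_t frac_lt_1[of t] in auto)
    then show ?thesis using 3 d by (simp add: tent_deriv_def)
  qed
qed

lemma has_integral_of_real_derivative:
  fixes F f :: "real \<Rightarrow> real"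
  assumes "a \<le> b" "\<And>x. (F has_real_derivative f x) (at x)"
  shows "(f has_integral (F b - F a)) {a..b}"
  by (rule fundamental_theorem_of_calculus[OF assms(1)])
     (auto simp: has_real_derivative_iff_has_vector_derivative[symmetric]
           intro: has_field_derivative_at_within assms(2))

context
  fixes d :: real
  assumes d: "0 < d" "d < 1/2"
begin

lemma has_integral_comp_tent:
  fixes G :: "real \<Rightarrow> real"
  assumes G0: "G 0 = 0" and left: "((\<lambda>s. G ((d - s) / d\<^sup>2)) has_integral I) {0..d}"
  shows "((\<lambda>t. G (tent d t)) has_integral 2 * I) {0..1}"
proof -
  have "((\<lambda>t. G (tent d t)) has_integral I) {0..d}"
    using left by (subst has_integral_cong[OF arg_cong[OF tent_left[OF d]]]) auto
  moreover have "((\<lambda>t. G (tent d t)) has_integral 0) {d..1-d}"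
    using G0 by (subst has_integral_cong[of _ _ "\<lambda>_. 0"]) (auto simp: tent_middle[OF d])
  moreover have "((\<lambda>t. G (tent d t)) has_integral I) {1-d..1}"
  proof -
    have "((\<lambda>x. G ((d + x) / d\<^sup>2)) has_integral I) {-d..0}"
      using has_integral_reflect_real[THEN iffD2, OF left] by simp
    then have "((\<lambda>t. G ((t - 1 + d) / d\<^sup>2)) has_integral I) {1-d..1}"
      using has_integral_affinity'[of "\<lambda>x. G ((d + x) / d\<^sup>2)" I "-d" 0 1 "-1"]
      by (simp add: algebra_simps)
    then show ?thesis
      by (subst has_integral_cong[OF arg_cong[OF tent_right[OF d]]]) auto
  qed
  ultimately have "((\<lambda>t. G (tent d t)) has_integral I + 0 + I) {0..1}"
    using d by (intro has_integral_combine) (auto intro: has_integral_combine)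
  then show ?thesis by simp
qed

lemma has_integral_tent: "(tent d has_integral 1) {0..1}"
proof -
  have "((\<lambda>s. (d * s - s\<^sup>2 / 2) / d\<^sup>2) has_real_derivative (d - s) / d\<^sup>2) (at s)" for s
    using d by (auto intro!: derivative_eq_intros simp: field_simps power2_eq_square)
  from has_integral_of_real_derivative[of 0 d, OF _ this]
  have "((\<lambda>s. (d - s) / d\<^sup>2) has_integral 1/2) {0..d}"
    using d by (simp add: field_simps power2_eq_square)
  from has_integral_comp_tent[of "\<lambda>x. x", OF _ this] show ?thesis by simp
qed

lemma has_integral_tent_squared: "((\<lambda>t. (tent d t)\<^sup>2) has_integral 2 / (3 * d)) {0..1}"
proof -
  have "((\<lambda>s. (s - d) ^ 3 / (3 * d ^ 4)) has_real_derivative ((d - s) / d\<^sup>2)\<^sup>2) (at s)" for s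
    using d by (auto intro!: derivative_eq_intros simp: field_simps power2_eq_square eval_nat_numeral)
  from has_integral_of_real_derivative[of 0 d, OF _ this]
  have "((\<lambda>s. ((d - s) / d\<^sup>2)\<^sup>2) has_integral 1 / (3 * d)) {0..d}"
    using d by (simp add: field_simps eval_nat_numeral)
  from has_integral_comp_tent[of "\<lambda>x. x\<^sup>2", OF _ this] show ?thesis by simp
qed

lemma has_integral_tent_deriv_squared: "((\<lambda>t. (tent_deriv d t)\<^sup>2) has_integral 2 / d ^ 3) {0..1}"
proof -
  have const: "((\<lambda>_. 1 / d ^ 4) has_integral d / d ^ 4) {a..a + d}" for a
    using has_integral_const_real[of "1 / d ^ 4" a "a + d"] d by simp
  have "((\<lambda>t. (tent_deriv d t)\<^sup>2) has_integral d / d ^ 4) {0..d}"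
    by (rule has_integral_spike_finite[of "{d}", OF _ _ const[of 0, simplified]])
       (use d in \<open>auto simp: tent_deriv_def power_divide\<close>)
  moreover have "((\<lambda>t. (tent_deriv d t)\<^sup>2) has_integral 0) {d..1-d}"
    using d by (subst has_integral_cong[of _ _ "\<lambda>_. 0"]) (auto simp: tent_deriv_def)
  moreover have "((\<lambda>t. (tent_deriv d t)\<^sup>2) has_integral d / d ^ 4) {1-d..1}"
    by (rule has_integral_spike_finite[of "{1-d, 1}", OF _ _ const[of "1 - d", simplified]])
       (use d in \<open>auto simp: tent_deriv_def power_divide\<close>)
  ultimately have "((\<lambda>t. (tent_deriv d t)\<^sup>2) has_integral d / d ^ 4 + 0 + d / d ^ 4) {0..1}"
    using d by (intro has_integral_combine) (auto intro: has_integral_combine)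
  moreover have "d / d ^ 4 + 0 + d / d ^ 4 = 2 / d ^ 3"
    using d by (simp add: field_simps eval_nat_numeral)
  ultimately show ?thesis by simp
qed

end

section \<open>Periodic integrals and the comb\<close>

context
  fixes h :: "real \<Rightarrow> 'b::banach" and I :: 'b
  assumes periodic: "\<And>t k. h (t + of_int k) = h t"
    and period_integral: "(h has_integral I) {0..1}"
begin

lemma has_integral_periodic_shift: "(h has_integral I) {of_int k..of_int k + 1}"
proof -
  have "((\<lambda>x. h (x - of_int k)) has_integral I) {of_int k..of_int k + 1}"
    using has_integral_affinity'[OF period_integral[unfolded interval_cbox], of 1 "- of_int k"]
    by (simp add: add.commute)
  then show ?thesis
    using periodic[of _ "- k"] by simp
qed

lemma has_integral_periodic_periods: "(h has_integral real j *\<^sub>R I) {of_int k..of_int k + real j}"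
proof (induction j)
  case 0
  show ?case using has_integral_refl(2)[of h "of_int k"] by simp
next
  case (Suc j)
  have "(h has_integral I) {of_int k + real j..of_int k + real (Suc j)}"
    using has_integral_periodic_shift[of "k + int j"] by (simp add: ac_simps)
  from has_integral_combine[OF _ _ Suc.IH this] show ?case
    by (simp add: algebra_simps)
qed

lemma has_integral_periodic_rescaled:
  assumes "N > 0"
  shows "((\<lambda>x. h (real N * x)) has_integral (real j / real N) *\<^sub>R I)
           {of_int k / real N..(of_int k + real j) / real N}"
  using has_integral_affinity'[OF has_integral_periodic_periods[of j k, unfolded interval_cbox], of "real N" 0] assms
  by (simp add: divide_inverse mult.commute)

end

definition comb :: "nat \<Rightarrow> real \<Rightarrow> real \<Rightarrow> real" where
  "comb N d x = tent d (real N * x)"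

definition comb_deriv :: "nat \<Rightarrow> real \<Rightarrow> real \<Rightarrow> real" where
  "comb_deriv N d x = real N * tent_deriv d (real N * x)"

lemma comb_nonneg: "0 \<le> comb N d x"
  by (simp add: comb_def tent_nonneg)

lemma comb_le: "0 < d \<Longrightarrow> comb N d x \<le> 1 / d"
  by (simp add: comb_def tent_le)

lemma comb_deriv_bound: "0 < d \<Longrightarrow> \<bar>comb_deriv N d x\<bar> \<le> real N / d\<^sup>2"
  using tent_deriv_bound[of d "real N * x"]
  by (simp add: comb_deriv_def abs_mult mult_left_mono divide_inverse)

lemma lipschitz_on_comb: "lipschitz_on (real N / d\<^sup>2) A (comb N d)"
proof (rule lipschitz_onI)
  fix x y
  show "dist (comb N d x) (comb N d y) \<le> real N / d\<^sup>2 * dist x y"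
    using tent_lipschitz[of d "real N * x" "real N * y"]
    by (simp add: comb_def dist_real_def abs_mult right_diff_distrib[symmetric])
qed simp

lemma continuous_on_comb: "continuous_on A (comb N d)"
  by (rule lipschitz_on_continuous_on[OF lipschitz_on_comb])

lemma borel_measurable_comb: "comb N d \<in> borel_measurable borel"
  by (rule borel_measurable_continuous_onI[OF continuous_on_comb])

lemma borel_measurable_comb_deriv: "comb_deriv N d \<in> borel_measurable borel"
  unfolding comb_deriv_def tent_deriv_def frac_def by measurable

lemma comb_periodic: "comb N d (x + 1) = comb N d x"
  using tent_add_of_int[of d "real N * x" "int N"] by (simp add: comb_def algebra_simps)

lemma comb_deriv_periodic: "comb_deriv N d (x + 1) = comb_deriv N d x"
  using tent_deriv_add_of_int[of d "real N * x" "int N"] by (simp add: comb_deriv_def algebra_simps)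

lemma comb_has_real_derivative:
  assumes "0 < d" "d < 1/2" "frac (real N * x) \<notin> {0, d, 1 - d}"
  shows "(comb N d has_real_derivative comb_deriv N d x) (at x)"
  using DERIV_chain2[OF tent_has_real_derivative[OF assms] DERIV_cmult_Id[of "real N" x]]
  by (simp add: comb_def[abs_def] comb_deriv_def mult.commute)

lemma countable_comb_nondifferentiable:
  assumes "N > 0"
  shows "countable {x. frac (real N * x) \<in> {0, d, 1 - d}}"
proof -
  have "{x. frac (real N * x) \<in> {0, d, 1 - d}} \<subseteq> (\<lambda>(k, c). (of_int k + c) / real N) ` (UNIV \<times> {0, d, 1 - d})"
  proof
    fix x assume "x \<in> {x. frac (real N * x) \<in> {0, d, 1 - d}}"
    moreover have "x = (of_int \<lfloor>real N * x\<rfloor> + frac (real N * x)) / real N"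
      using assms by (simp add: frac_def)
    ultimately show "x \<in> (\<lambda>(k, c). (of_int k + c) / real N) ` (UNIV \<times> {0, d, 1 - d})"
      by (intro image_eqI[of _ _ "(\<lfloor>real N * x\<rfloor>, frac (real N * x))"]) auto
  qed
  then show ?thesis
    by (rule countable_subset) (intro countable_image countable_SIGMA; simp)
qed

context
  fixes N :: nat and d :: real
  assumes N: "N > 0" and d: "0 < d" "d < 1/2"
begin

lemma has_integral_comb: "(comb N d has_integral 1) {0..1}"
  using has_integral_periodic_rescaled[OF tent_add_of_int has_integral_tent[OF d] N, of N 0] N
  by (simp add: comb_def[abs_def])

lemma has_integral_comb_squared: "((\<lambda>x. (comb N d x)\<^sup>2) has_integral 2 / (3 * d)) {0..1}"
  using has_integral_periodic_rescaled[OF _ has_integral_tent_squared[OF d] N, of N 0] N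
  by (simp add: comb_def tent_add_of_int)

lemma has_integral_comb_deriv_squared:
  "((\<lambda>x. (comb_deriv N d x)\<^sup>2) has_integral (real N)\<^sup>2 * (2 / d ^ 3)) {0..1}"
proof -
  have "((\<lambda>x. (tent_deriv d (real N * x))\<^sup>2) has_integral 2 / d ^ 3) {0..1}"
    using has_integral_periodic_rescaled[OF _ has_integral_tent_deriv_squared[OF d] N, of N 0] N
    by (simp add: tent_deriv_add_of_int)
  from has_integral_mult_right[OF this, of "(real N)\<^sup>2"] show ?thesis
    by (simp add: comb_deriv_def power_mult_distrib)
qed

lemma integral_comb_le:
  assumes "a \<le> b"
  shows "integral {a..b} (comb N d) \<le> min ((b - a) / d) (b - a + 2 / real N)"
proof -
  have int: "comb N d integrable_on {a..b}"
    by (rule integrable_continuous_real[OF continuous_on_comb])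
  have "integral {a..b} (comb N d) \<le> integral {a..b} (\<lambda>_. 1 / d)"
    using comb_le[OF d(1)] by (intro integral_le int) auto
  moreover have "integral {a..b} (comb N d) \<le> b - a + 2 / real N"
  proof -
    define k where "k = \<lfloor>real N * a\<rfloor>"
    define j where "j = nat \<lceil>real N * (b - a)\<rceil> + 1"
    have "of_int k \<le> real N * a" "real N * a < of_int k + 1"
      unfolding k_def by linarith+
    moreover have "real N * (b - a) + 1 \<le> real j" "real j < real N * (b - a) + 2"
      using assms N unfolding j_def by (simp_all, linarith+)
    ultimately have lo: "of_int k / real N \<le> a" and hi: "b \<le> (of_int k + real j) / real N"
      and j: "real j / real N \<le> b - a + 2 / real N"
      using N by (simp_all add: field_simps)
    have "integral {a..b} (comb N d) \<le> integral {of_int k / real N..(of_int k + real j) / real N} (comb N d)"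
      using lo hi comb_nonneg
      by (intro integral_subset_le int integrable_continuous_real[OF continuous_on_comb]) auto
    also have "\<dots> = real j / real N"
      using has_integral_periodic_rescaled[OF tent_add_of_int has_integral_tent[OF d] N, of j k]
      by (simp add: comb_def[abs_def] integral_unique)
    finally show ?thesis using j by linarith
  qed
  ultimately show ?thesis using assms by simp
qed

end

section \<open>Functions of product form on the plane\<close>

lemma set_integrable_bounded:
  fixes h :: "'a::euclidean_space \<Rightarrow> real"
  assumes "S \<in> sets lborel" "emeasure lborel S < \<infinity>" "h \<in> borel_measurable lborel"
    and "\<And>x. \<bar>h x\<bar> \<le> B"
  shows "set_integrable lborel S h"
proof -
  have B: "0 \<le> B" using assms(4)[of 0] by linarith
  have "integrable lborel (\<lambda>x. indicator S x * B)"
    using assms(1,2) by (intro integrable_mult_left integrable_real_indicator) auto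
  then show ?thesis
    unfolding set_integrable_def
    by (rule Bochner_Integration.integrable_bound) (use assms B in \<open>auto simp: indicator_def\<close>)
qed

lemma borel_measurable_tensor:
  fixes u v :: "real \<Rightarrow> real"
  assumes "u \<in> borel_measurable borel" "v \<in> borel_measurable borel"
  shows "(\<lambda>z. u (fst z) * v (snd z)) \<in> borel_measurable borel"
  using borel_measurable_times[OF measurable_compose[OF measurable_fst assms(1)]
                                  measurable_compose[OF measurable_snd assms(2)]]
  by (simp add: borel_prod)

lemma set_integral_cbox_tensor:
  fixes u v :: "real \<Rightarrow> real"
  assumes u: "u \<in> borel_measurable borel" "\<And>x. \<bar>u x\<bar> \<le> Bu"
    and v: "v \<in> borel_measurable borel" "\<And>y. \<bar>v y\<bar> \<le> Bv"
  shows "set_integrable lborel (cbox (a, c) (b, e)) (\<lambda>z. u (fst z) * v (snd z))"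
    and "(LINT z:cbox (a, c) (b, e)|lborel. u (fst z) * v (snd z)) = integral {a..b} u * integral {c..e} v"
proof -
  have "0 \<le> Bu" using u(2)[of 0] by linarith
  then have "\<bar>u (fst z) * v (snd z)\<bar> \<le> Bu * Bv" for z
    unfolding abs_mult by (intro mult_mono u(2) v(2)) auto
  then show int: "set_integrable lborel (cbox (a, c) (b, e)) (\<lambda>z. u (fst z) * v (snd z))"
    using borel_measurable_tensor[OF u(1) v(1)]
    by (intro set_integrable_bounded[OF _ emeasure_lborel_cbox_finite]) auto
  have int_u: "set_integrable lborel {a..b} u" and int_v: "set_integrable lborel {c..e} v"
    using u v emeasure_lborel_cbox_finite[of a b] emeasure_lborel_cbox_finite[of c e]
    by (auto intro!: set_integrable_bounded)
  define U where "U x = indicator {a..b} x * u x" for x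
  define V where "V y = indicator {c..e} y * v y" for y
  have split: "indicator (cbox (a, c) (b, e)) z *\<^sub>R (u (fst z) * v (snd z)) = U (fst z) * V (snd z)" for z
    unfolding U_def V_def cbox_Pair_eq by (cases z) (simp add: indicator_times)
  have "integrable (lborel \<Otimes>\<^sub>M lborel) (\<lambda>z::real \<times> real. U (fst z) * V (snd z))"
    using int unfolding set_integrable_def split by (simp add: lborel_prod)
  then have "(LINT z:cbox (a, c) (b, e)|lborel. u (fst z) * v (snd z)) = (\<integral>x. (\<integral>y. U x * V y \<partial>lborel) \<partial>lborel)"
    unfolding set_lebesgue_integral_def split
    by (simp add: lborel_prod[symmetric] lborel_pair.integral_fst'[symmetric])
  also have "\<dots> = integral\<^sup>L lborel U * integral\<^sup>L lborel V"
    by simp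
  also have "\<dots> = integral {a..b} u * integral {c..e} v"
    using set_borel_integral_eq_integral(2)[OF int_u] set_borel_integral_eq_integral(2)[OF int_v]
    by (simp add: set_lebesgue_integral_def U_def[abs_def] V_def[abs_def])
  finally show "(LINT z:cbox (a, c) (b, e)|lborel. u (fst z) * v (snd z)) = integral {a..b} u * integral {c..e} v" .
qed

lemma set_integral_one_cbox:
  shows "set_integrable lborel (cbox (a, c) (b, e)) (\<lambda>z::real \<times> real. 1 :: real)"
    and "a \<le> b \<Longrightarrow> c \<le> e \<Longrightarrow> (LINT z:cbox (a, c) (b, e)|lborel. 1 :: real) = (b - a) * (e - c)"
  using set_integral_cbox_tensor[of "\<lambda>_. 1" 1 "\<lambda>_. 1" 1 a c b e] by simp_all

lemma lipschitz_on_tensor: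
  fixes u v :: "real \<Rightarrow> real"
  assumes "\<And>x. \<bar>u x\<bar> \<le> B" "\<And>y. \<bar>v y\<bar> \<le> B"
    and "lipschitz_on L UNIV u" "lipschitz_on L UNIV v"
  shows "lipschitz_on (2 * B * L) UNIV (\<lambda>z. u (fst z) * v (snd z))"
proof (rule lipschitz_onI)
  have B: "0 \<le> B" and L: "0 \<le> L"
    using assms(1)[of 0] lipschitz_on_nonneg[OF assms(3)] by linarith+
  then show "0 \<le> 2 * B * L" by simp
  fix z w :: "real \<times> real"
  have du: "\<bar>u (fst z) - u (fst w)\<bar> \<le> L * dist z w"
    using lipschitz_onD[OF assms(3), of "fst z" "fst w"] dist_fst_le[of z w] L
    by (simp add: dist_real_def) (meson mult_left_mono order_trans)
  have dv: "\<bar>v (snd z) - v (snd w)\<bar> \<le> L * dist z w"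
    using lipschitz_onD[OF assms(4), of "snd z" "snd w"] dist_snd_le[of z w] L
    by (simp add: dist_real_def) (meson mult_left_mono order_trans)
  have "\<bar>u (fst z) * v (snd z) - u (fst w) * v (snd w)\<bar>
          = \<bar>u (fst z) * (v (snd z) - v (snd w)) + v (snd w) * (u (fst z) - u (fst w))\<bar>"
    by (simp add: algebra_simps)
  also have "\<dots> \<le> \<bar>u (fst z)\<bar> * \<bar>v (snd z) - v (snd w)\<bar> + \<bar>v (snd w)\<bar> * \<bar>u (fst z) - u (fst w)\<bar>"
    by (metis abs_mult abs_triangle_ineq)
  also have "\<dots> \<le> B * (L * dist z w) + B * (L * dist z w)"
    using assms(1,2) du dv B by (intro add_mono mult_mono) auto
  finally have "\<bar>u (fst z) * v (snd z) - u (fst w) * v (snd w)\<bar> \<le> B * (L * dist z w) + B * (L * dist z w)" .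
  then show "dist (u (fst z) * v (snd z)) (u (fst w) * v (snd w)) \<le> 2 * B * L * dist z w"
    by (simp add: dist_real_def algebra_simps)
qed

lemma set_integral_mono_set:
  fixes g :: "'a \<Rightarrow> real"
  assumes "A \<subseteq> B" "set_integrable M A g" "set_integrable M B g" "\<And>x. x \<in> B \<Longrightarrow> 0 \<le> g x"
  shows "(LINT x:A|M. g x) \<le> (LINT x:B|M. g x)"
  unfolding set_lebesgue_integral_def
  using assms unfolding set_integrable_def
  by (intro integral_mono) (auto simp: indicator_def)

lemma null_sets_fst_countable:
  assumes "countable E"
  shows "{z::real \<times> real. fst z \<in> E} \<in> null_sets lborel"
proof -
  have "E \<times> (UNIV :: real set) \<in> null_sets (lborel \<Otimes>\<^sub>M lborel)"
    using countable_imp_null_set_lborel[OF assms] by (intro lborel.times_in_null_sets1) auto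
  moreover have "{z::real \<times> real. fst z \<in> E} = E \<times> UNIV" by auto
  ultimately show ?thesis by (simp add: lborel_prod)
qed

lemma null_sets_snd_countable:
  assumes "countable E"
  shows "{z::real \<times> real. snd z \<in> E} \<in> null_sets lborel"
proof -
  have "(UNIV :: real set) \<times> E \<in> null_sets (lborel \<Otimes>\<^sub>M lborel)"
    using countable_imp_null_set_lborel[OF assms] by (intro lborel.times_in_null_sets2) auto
  moreover have "{z::real \<times> real. snd z \<in> E} = UNIV \<times> E" by auto
  ultimately show ?thesis by (simp add: lborel_prod)
qed

section \<open>The test functions\<close>

definition comb_tensor :: "nat \<Rightarrow> real \<Rightarrow> real \<times> real \<Rightarrow> real" where
  "comb_tensor N d z = comb N d (fst z) * comb N d (snd z) - 1"

definition comb_tensor_grad :: "nat \<Rightarrow> real \<Rightarrow> real \<times> real \<Rightarrow> real \<times> real" where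
  "comb_tensor_grad N d z =
     (comb_deriv N d (fst z) * comb N d (snd z), comb N d (fst z) * comb_deriv N d (snd z))"

context
  fixes N :: nat and d :: real
  assumes N: "N > 0" and d: "0 < d" "d < 1/2"
begin

lemma abs_comb_le: "\<bar>comb N d x\<bar> \<le> 1 / d"
  using comb_nonneg comb_le[OF d(1)] by simp

lemma abs_comb_squared_le: "\<bar>(comb N d x)\<^sup>2\<bar> \<le> (1 / d)\<^sup>2"
  using power_mono[OF abs_comb_le abs_ge_zero, of x 2] by simp

lemma abs_comb_deriv_squared_le: "\<bar>(comb_deriv N d x)\<^sup>2\<bar> \<le> (real N / d\<^sup>2)\<^sup>2"
  using power_mono[OF comb_deriv_bound[OF d(1)] abs_ge_zero, of N x 2] by simp

lemma borel_measurable_comb_squared: "(\<lambda>x. (comb N d x)\<^sup>2) \<in> borel_measurable borel"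
  using borel_measurable_comb by measurable

lemma borel_measurable_comb_deriv_squared: "(\<lambda>x. (comb_deriv N d x)\<^sup>2) \<in> borel_measurable borel"
  using borel_measurable_comb_deriv by measurable

lemmas set_integral_comb_comb = set_integral_cbox_tensor[OF
    borel_measurable_comb abs_comb_le borel_measurable_comb abs_comb_le]

lemma abs_comb_tensor_le: "\<bar>comb_tensor N d z\<bar> \<le> comb N d (fst z) * comb N d (snd z) + 1"
  using comb_nonneg[of N d] by (simp add: comb_tensor_def abs_le_iff)

lemma set_integral_comb_tensor_majorant:
  assumes "a \<le> b" "c \<le> e"
  shows "(LINT z:cbox (a, c) (b, e)|lborel. comb N d (fst z) * comb N d (snd z) + 1)
           = integral {a..b} (comb N d) * integral {c..e} (comb N d) + (b - a) * (e - c)"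
  using set_integral_add(2)[OF set_integral_comb_comb(1) set_integral_one_cbox(1)]
  by (simp add: set_integral_comb_comb(2) set_integral_one_cbox(2) assms)

lemma set_integral_abs_comb_tensor_le:
  assumes "bounded S" "S \<in> sets lborel"
  shows "set_integrable lborel S (\<lambda>z. comb N d (fst z) * comb N d (snd z) + 1)"
    and "(LINT z:S|lborel. \<bar>comb_tensor N d z\<bar>) \<le> (LINT z:S|lborel. comb N d (fst z) * comb N d (snd z) + 1)"
proof -
  have fin: "emeasure lborel S < \<infinity>"
    using emeasure_bounded_finite[OF assms(1)] by (simp add: less_top)
  have meas: "(\<lambda>z. comb N d (fst z) * comb N d (snd z)) \<in> borel_measurable borel"
    by (rule borel_measurable_tensor[OF borel_measurable_comb borel_measurable_comb])
  have bound: "0 \<le> comb N d (fst z) * comb N d (snd z)" "comb N d (fst z) * comb N d (snd z) \<le> 1 / d * (1 / d)" for z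
    by (simp add: comb_nonneg) (intro mult_mono comb_le comb_nonneg; use d in simp)
  show maj: "set_integrable lborel S (\<lambda>z. comb N d (fst z) * comb N d (snd z) + 1)"
  proof (rule set_integrable_bounded[OF assms(2) fin])
    show "\<bar>comb N d (fst z) * comb N d (snd z) + 1\<bar> \<le> 1 / d * (1 / d) + 1" for z
      using bound[of z] by linarith
  qed (use meas in simp)
  have "set_integrable lborel S (\<lambda>z. \<bar>comb_tensor N d z\<bar>)"
  proof (rule set_integrable_bounded[OF assms(2) fin])
    show "\<bar>\<bar>comb_tensor N d z\<bar>\<bar> \<le> 1 / d * (1 / d) + 1" for z
      using bound[of z] unfolding comb_tensor_def by linarith
  qed (use meas in \<open>simp add: comb_tensor_def[abs_def]\<close>)
  then show "(LINT z:S|lborel. \<bar>comb_tensor N d z\<bar>) \<le> (LINT z:S|lborel. comb N d (fst z) * comb N d (snd z) + 1)"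
    by (rule set_integral_mono[OF _ maj abs_comb_tensor_le])
qed

lemma set_integral_comb_tensor: "(LINT z:unit_square|lborel. comb_tensor N d z) = 0"
  using set_integral_diff(2)[OF set_integral_comb_comb(1) set_integral_one_cbox(1)]
  by (simp add: unit_square_def comb_tensor_def set_integral_comb_comb set_integral_one_cbox
                integral_unique[OF has_integral_comb[OF N d]])

lemma torus_L1_comb_tensor: "torus_L1 (comb_tensor N d) \<le> 2"
  using set_integral_abs_comb_tensor_le(2)[of unit_square] set_integral_comb_tensor_majorant[of 0 1 0 1]
  by (simp add: torus_L1_def unit_square_def integral_unique[OF has_integral_comb[OF N d]])

lemma ball_integral_comb_tensor_le:
  assumes r: "0 < r"
  shows "(LINT y:ball p r|lborel. \<bar>comb_tensor N d y\<bar>) \<le> (min (2 * r / d) (2 * r + 2 / real N))\<^sup>2 + (2 * r)\<^sup>2"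
proof -
  define box where "box = cbox (fst p - r, snd p - r) (fst p + r, snd p + r)"
  have "ball p r \<subseteq> box"
  proof
    fix y assume "y \<in> ball p r"
    then have "dist (fst p) (fst y) < r" "dist (snd p) (snd y) < r"
      using dist_fst_le[of p y] dist_snd_le[of p y] by auto
    then show "y \<in> box" by (cases y) (auto simp: box_def dist_real_def cbox_Pair_eq abs_less_iff)
  qed
  have "(LINT y:ball p r|lborel. \<bar>comb_tensor N d y\<bar>)
          \<le> (LINT z:ball p r|lborel. comb N d (fst z) * comb N d (snd z) + 1)"
    by (rule set_integral_abs_comb_tensor_le(2)) simp_all
  also have "\<dots> \<le> (LINT z:box|lborel. comb N d (fst z) * comb N d (snd z) + 1)"
    by (rule set_integral_mono_set[OF \<open>ball p r \<subseteq> box\<close>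
          set_integral_abs_comb_tensor_le(1) set_integral_abs_comb_tensor_le(1)])
       (simp_all add: box_def comb_nonneg)
  also have "\<dots> = integral {fst p - r..fst p + r} (comb N d) * integral {snd p - r..snd p + r} (comb N d) + (2 * r)\<^sup>2"
    using r by (simp add: box_def set_integral_comb_tensor_majorant power2_eq_square)
  also have "\<dots> \<le> (min (2 * r / d) (2 * r + 2 / real N))\<^sup>2 + (2 * r)\<^sup>2"
  proof -
    have le: "integral {a - r..a + r} (comb N d) \<le> min (2 * r / d) (2 * r + 2 / real N)" for a
      using integral_comb_le[OF N d, of "a - r" "a + r"] r by simp
    have nonneg: "0 \<le> integral {a - r..a + r} (comb N d)" for a
      by (intro integral_nonneg integrable_continuous_real continuous_on_comb comb_nonneg)
    show ?thesis
      using mult_mono'[OF le le nonneg nonneg] by (simp add: power2_eq_square)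
  qed
  finally show ?thesis .
qed

lemma comb_tensor_has_derivative:
  assumes "frac (real N * fst z) \<notin> {0, d, 1 - d}" "frac (real N * snd z) \<notin> {0, d, 1 - d}"
  shows "(comb_tensor N d has_derivative (\<lambda>h. comb_tensor_grad N d z \<bullet> h)) (at z)"
proof -
  have "((\<lambda>w. comb N d (fst w)) has_derivative (\<lambda>h. comb_deriv N d (fst z) * fst h)) (at z)"
    using has_derivative_compose[OF has_derivative_fst[OF has_derivative_ident]
        comb_has_real_derivative[OF d assms(1), unfolded has_field_derivative_def]] by simp
  moreover have "((\<lambda>w. comb N d (snd w)) has_derivative (\<lambda>h. comb_deriv N d (snd z) * snd h)) (at z)"
    using has_derivative_compose[OF has_derivative_snd[OF has_derivative_ident]
        comb_has_real_derivative[OF d assms(2), unfolded has_field_derivative_def]] by simp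
  ultimately show ?thesis
    unfolding comb_tensor_def[abs_def]
    by (auto intro!: derivative_eq_intros simp: comb_tensor_grad_def algebra_simps)
qed

lemma W1inf_torus_comb_tensor: "W1inf_torus (comb_tensor N d) (comb_tensor_grad N d)"
  unfolding W1inf_torus_def
proof (intro conjI)
  show "torus_periodic (comb_tensor N d)" "torus_periodic (comb_tensor_grad N d)"
    by (simp_all add: torus_periodic_def comb_tensor_def comb_tensor_grad_def comb_periodic comb_deriv_periodic)
  have "lipschitz_on (2 * (1 / d) * (real N / d\<^sup>2)) UNIV (\<lambda>z. comb N d (fst z) * comb N d (snd z))"
    by (intro lipschitz_on_tensor abs_comb_le lipschitz_on_comb)
  then have "lipschitz_on (2 * (1 / d) * (real N / d\<^sup>2)) UNIV (comb_tensor N d)"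
    by (simp add: lipschitz_on_def comb_tensor_def dist_real_def)
  then show "\<exists>L\<ge>0. lipschitz_on L UNIV (comb_tensor N d)"
    using lipschitz_on_nonneg by blast
  show "comb_tensor_grad N d \<in> borel_measurable lborel"
    using borel_measurable_tensor[OF borel_measurable_comb_deriv borel_measurable_comb]
      borel_measurable_tensor[OF borel_measurable_comb borel_measurable_comb_deriv]
    unfolding comb_tensor_grad_def[abs_def] by (simp add: borel_measurable_Pair)
  define E where "E = {x. frac (real N * x) \<in> {0, d, 1 - d}}"
  have "countable E"
    unfolding E_def by (rule countable_comb_nondifferentiable[OF N])
  then have "{z. fst z \<in> E} \<union> {z. snd z \<in> E} \<in> null_sets lborel"
    using null_sets_fst_countable null_sets_snd_countable by blast
  then show "AE z in lborel. (comb_tensor N d has_derivative (\<lambda>h. comb_tensor_grad N d z \<bullet> h)) (at z)"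
    by (rule AE_I') (auto simp: E_def intro: comb_tensor_has_derivative)
qed

lemma torus_L2_comb_tensor: "torus_L2 (comb_tensor N d) = sqrt ((2 / (3 * d))\<^sup>2 - 1)"
proof -
  let ?c = "\<lambda>z. comb N d (fst z) * comb N d (snd z)"
  let ?c2 = "\<lambda>z. (comb N d (fst z))\<^sup>2 * (comb N d (snd z))\<^sup>2"
  note square_tensor = set_integral_cbox_tensor[OF
      borel_measurable_comb_squared abs_comb_squared_le borel_measurable_comb_squared abs_comb_squared_le]
  have int_c: "set_integrable lborel unit_square (\<lambda>z. 2 * ?c z)"
    unfolding unit_square_def by (intro set_integrable_mult_right set_integral_comb_comb(1))
  have int_c2: "set_integrable lborel unit_square ?c2"
    unfolding unit_square_def by (rule square_tensor(1))
  have "(LINT z:unit_square|lborel. (comb_tensor N d z)\<^sup>2) = (LINT z:unit_square|lborel. ?c2 z - 2 * ?c z + 1)"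
    by (simp add: comb_tensor_def power2_eq_square algebra_simps)
  also have "\<dots> = (LINT z:unit_square|lborel. ?c2 z) - (LINT z:unit_square|lborel. 2 * ?c z) + (LINT z:unit_square|lborel. 1)"
    using set_integral_add(2)[OF set_integral_diff(1)[OF int_c2 int_c], of "\<lambda>_. 1"]
      set_integral_diff(2)[OF int_c2 int_c] set_integral_one_cbox(1)[of 0 0 1 1]
    by (simp add: unit_square_def)
  also have "\<dots> = (2 / (3 * d))\<^sup>2 - 1"
    by (simp add: unit_square_def square_tensor(2) set_integral_comb_comb set_integral_one_cbox
        integral_unique[OF has_integral_comb[OF N d]] integral_unique[OF has_integral_comb_squared[OF N d]])
       (simp add: power2_eq_square)
  finally show ?thesis by (simp add: torus_L2_def)
qed

lemma torus_grad_L2_comb_tensor: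
  "torus_grad_L2 (comb_tensor_grad N d) = sqrt (2 * (2 / (3 * d)) * ((real N)\<^sup>2 * (2 / d ^ 3)))"
proof -
  note deriv_tensor = set_integral_cbox_tensor[OF
      borel_measurable_comb_deriv_squared abs_comb_deriv_squared_le borel_measurable_comb_squared abs_comb_squared_le]
  note tensor_deriv = set_integral_cbox_tensor[OF
      borel_measurable_comb_squared abs_comb_squared_le borel_measurable_comb_deriv_squared abs_comb_deriv_squared_le]
  have "(LINT z:unit_square|lborel. (norm (comb_tensor_grad N d z))\<^sup>2)
          = (LINT z:unit_square|lborel. (comb_deriv N d (fst z))\<^sup>2 * (comb N d (snd z))\<^sup>2
                                      + (comb N d (fst z))\<^sup>2 * (comb_deriv N d (snd z))\<^sup>2)"
    by (simp add: comb_tensor_grad_def norm_Pair power_mult_distrib)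
  also have "\<dots> = 2 * (2 / (3 * d)) * ((real N)\<^sup>2 * (2 / d ^ 3))"
    using set_integral_add(2)[OF deriv_tensor(1) tensor_deriv(1)]
    by (simp add: unit_square_def deriv_tensor(2) tensor_deriv(2)
        integral_unique[OF has_integral_comb_squared[OF N d]] integral_unique[OF has_integral_comb_deriv_squared[OF N d]])
  finally show ?thesis by (simp add: torus_grad_L2_def)
qed

end

section \<open>Logarithmic estimates and the choice of scale\<close>

lemma mult_neg_ln_le_one: "0 < x \<Longrightarrow> x * - ln x \<le> (1::real)"
  using ln_le_minus_one[of "1 / x"] by (simp add: ln_div field_simps)

lemma sqrt_le_one_plus: "0 \<le> x \<Longrightarrow> sqrt x \<le> 1 + x"
  by (rule power2_le_imp_le) (auto simp: power2_eq_square algebra_simps)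

lemma square_mult_sqrt_neg_ln_le:
  fixes r :: real
  assumes r: "0 < r" "r < 1/2"
  shows "(2 * r)\<^sup>2 * sqrt (- ln r) \<le> 3"
proof -
  define L where "L = - ln r"
  have L: "0 < L" "r * L \<le> 1"
    using r mult_neg_ln_le_one[of r] by (simp_all add: L_def)
  have "r * r \<le> 1/2 * (1/2)"
    using r by (intro mult_mono) auto
  have "(2 * r)\<^sup>2 * sqrt L \<le> 4 * r\<^sup>2 * (1 + L)"
    using L sqrt_le_one_plus[of L] by (simp add: power_mult_distrib mult_left_mono)
  also have "\<dots> = 4 * r\<^sup>2 + 4 * r * (r * L)"
    by (simp add: algebra_simps power2_eq_square)
  also have "\<dots> \<le> 1 + 4 * (1/2) * 1"
    using r L \<open>r * r \<le> 1/2 * (1/2)\<close> by (intro add_mono mult_mono) (auto simp: power2_eq_square)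
  finally show ?thesis by (simp add: L_def)
qed

lemma large_radius_bound_mult_sqrt_neg_ln_le:
  fixes N d r :: real
  assumes N: "1 \<le> N" and d: "0 < d" "sqrt (ln (N / d)) \<le> 2 * N\<^sup>2"
    and r: "d / N \<le> r" "r < 1/2"
  shows "(2 * r + 2 / N)\<^sup>2 * sqrt (- ln r) \<le> 22"
proof -
  have "0 < d / N" using d N by simp
  then have "0 < r" using r by linarith
  have "1 / r \<le> N / d"
    using N d r \<open>0 < r\<close> by (simp add: field_simps)
  then have "ln (1 / r) \<le> ln (N / d)"
    using \<open>0 < r\<close> by (intro ln_mono) auto
  then have sqrt_L: "sqrt (- ln r) \<le> 2 * N\<^sup>2"
    using d(2) \<open>0 < r\<close> by (simp add: ln_div) (meson order_trans real_sqrt_le_iff)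
  have "(2 * r + 2 / N)\<^sup>2 \<le> 2 * (2 * r)\<^sup>2 + 2 * (2 / N)\<^sup>2"
    using zero_le_power2[of "2 * r - 2 / N"] by (simp add: power2_eq_square algebra_simps)
  then have "(2 * r + 2 / N)\<^sup>2 * sqrt (- ln r) \<le> (2 * (2 * r)\<^sup>2 + 8 / N\<^sup>2) * sqrt (- ln r)"
    using r \<open>0 < r\<close> by (intro mult_right_mono) (simp_all add: power_divide)
  also have "\<dots> = 2 * ((2 * r)\<^sup>2 * sqrt (- ln r)) + 8 / N\<^sup>2 * sqrt (- ln r)"
    by (simp add: algebra_simps)
  also have "\<dots> \<le> 2 * 3 + 8 / N\<^sup>2 * (2 * N\<^sup>2)"
    using square_mult_sqrt_neg_ln_le[OF \<open>0 < r\<close> r(2)] sqrt_L N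
    by (intro add_mono mult_left_mono) auto
  finally show ?thesis using N by simp
qed

lemma small_radius_bound_mult_sqrt_neg_ln_le:
  fixes N d r :: real
  assumes N: "1 \<le> N" and d: "0 < d" "d \<le> N" "sqrt (ln (N / d)) \<le> 2 * N\<^sup>2"
    and r: "0 < r" "r < d / N"
  shows "(2 * r / d)\<^sup>2 * sqrt (- ln r) \<le> 16"
proof -
  define t where "t = r * N / d"
  have t: "0 < t" "t < 1" "r = t * d / N"
    using r d N by (auto simp: t_def field_simps)
  have "- ln r = - ln t + ln (N / d)"
    using t d N by (simp add: ln_div ln_mult)
  then have "sqrt (- ln r) \<le> sqrt (- ln t) + sqrt (ln (N / d))"
    by (simp only:) (rule sqrt_add_le_add_sqrt; use t d N in simp)
  also have "\<dots> \<le> (1 + - ln t) + 2 * N\<^sup>2"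
    using t d by (intro add_mono sqrt_le_one_plus) auto
  finally have "(2 * t / N)\<^sup>2 * sqrt (- ln r) \<le> (2 * t / N)\<^sup>2 * (1 + - ln t + 2 * N\<^sup>2)"
    by (rule mult_left_mono) simp
  moreover have "2 * r / d = 2 * t / N"
    using d N by (simp add: t_def field_simps)
  ultimately have "(2 * r / d)\<^sup>2 * sqrt (- ln r) \<le> (2 * t / N)\<^sup>2 * (1 + - ln t + 2 * N\<^sup>2)"
    by simp
  also have "\<dots> = 4 * t\<^sup>2 / N\<^sup>2 + 4 * (t * (t * - ln t)) / N\<^sup>2 + 8 * t\<^sup>2"
    using N by (simp add: field_simps power2_eq_square)
  also have "\<dots> \<le> 4 + 4 + 8"
  proof -
    define e where "e = t * - ln t"
    have "0 \<le> e" "e \<le> 1"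
      using t mult_neg_ln_le_one[of t] by (auto simp: e_def mult_nonneg_nonpos)
    then have "0 \<le> t * e" "t * e \<le> 1"
      using t by (auto intro: mult_le_one)
    moreover have "t\<^sup>2 \<le> 1" "1 \<le> N\<^sup>2"
      using t N by (auto simp: power_le_one)
    ultimately have "t\<^sup>2 \<le> N\<^sup>2" "t * e \<le> N\<^sup>2" "t\<^sup>2 \<le> 1"
      by linarith+
    then show ?thesis
      unfolding e_def[symmetric] using N by (intro add_mono) (auto simp: field_simps)
  qed
  finally show ?thesis by simp
qed

lemma min_square_bound_mult_sqrt_neg_ln_le:
  fixes N d r :: real
  assumes N: "1 \<le> N" and d: "0 < d" "d \<le> N" "sqrt (ln (N / d)) \<le> 2 * N\<^sup>2"
    and r: "0 < r" "r < 1/2"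
  shows "((min (2 * r / d) (2 * r + 2 / N))\<^sup>2 + (2 * r)\<^sup>2) * sqrt (- ln r) \<le> 25"
proof -
  have sqrt_L: "0 \<le> sqrt (- ln r)"
    using r by simp
  have "(min (2 * r / d) (2 * r + 2 / N))\<^sup>2 * sqrt (- ln r) \<le> 22"
  proof (cases "d / N \<le> r")
    case True
    have "(min (2 * r / d) (2 * r + 2 / N))\<^sup>2 \<le> (2 * r + 2 / N)\<^sup>2"
      using r d N by (intro power_mono) auto
    from mult_right_mono[OF this sqrt_L]
    show ?thesis
      using large_radius_bound_mult_sqrt_neg_ln_le[OF N d(1,3) True r(2)] by linarith
  next
    case False
    have "(min (2 * r / d) (2 * r + 2 / N))\<^sup>2 \<le> (2 * r / d)\<^sup>2"
      using r d N by (intro power_mono) auto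
    from mult_right_mono[OF this sqrt_L]
    show ?thesis
      using small_radius_bound_mult_sqrt_neg_ln_le[OF N d r(1)] False by linarith
  qed
  then show ?thesis
    using square_mult_sqrt_neg_ln_le[OF r] by (simp add: algebra_simps)
qed

definition spike_width :: "real \<Rightarrow> real" where
  "spike_width N = exp (- (N ^ 4)) / 2"

context
  fixes N :: real
  assumes N: "1 \<le> N"
begin

lemma spike_width_pos: "0 < spike_width N"
  by (simp add: spike_width_def)

lemma spike_width_less_half: "spike_width N < 1/2"
  using N by (simp add: spike_width_def)

lemma le_fourth_power: "N \<le> N ^ 4"
  using power_increasing[of 1 4 N] N by simp

lemma ln_le_fourth_power: "ln N \<le> N ^ 4" "ln 2 \<le> N ^ 4"
  using N le_fourth_power ln_le_minus_one[of N] ln_le_minus_one[of 2] by auto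

lemma sqrt_ln_div_spike_width_le: "sqrt (ln (N / spike_width N)) \<le> 2 * N\<^sup>2"
proof -
  have "ln (N / spike_width N) = ln N + N ^ 4 + ln 2"
    using N by (simp add: spike_width_def ln_div ln_mult)
  also have "\<dots> \<le> (2 * N\<^sup>2)\<^sup>2"
    using ln_le_fourth_power le_fourth_power N by (simp add: power_mult_distrib flip: power_mult)
  finally have "sqrt (ln (N / spike_width N)) \<le> sqrt ((2 * N\<^sup>2)\<^sup>2)"
    by (rule real_sqrt_le_mono)
  then show ?thesis
    by (simp only: real_sqrt_abs) simp
qed

lemma L2_norm_growth: "N - 1 \<le> sqrt ((2 / (3 * spike_width N))\<^sup>2 - 1)"
proof -
  have "N \<le> exp (N ^ 4)"
    using le_fourth_power exp_ge_add_one_self[of "N ^ 4"] by linarith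
  also have "\<dots> \<le> 2 / (3 * spike_width N)"
    by (simp add: spike_width_def exp_minus field_simps)
  finally have "N\<^sup>2 \<le> (2 / (3 * spike_width N))\<^sup>2"
    using N by (intro power_mono) auto
  moreover have "(N - 1)\<^sup>2 \<le> N\<^sup>2 - 1"
    using N by (simp add: power2_eq_square algebra_simps)
  ultimately have "sqrt ((N - 1)\<^sup>2) \<le> sqrt ((2 / (3 * spike_width N))\<^sup>2 - 1)"
    by (subst real_sqrt_le_iff) linarith
  then show ?thesis
    using N by simp
qed

lemma grad_norm_spike_width:
  defines "d \<equiv> spike_width N"
  shows "sqrt (2 * (2 / (3 * d)) * (N\<^sup>2 * (2 / d ^ 3))) = sqrt (8/3) * N / d\<^sup>2"
proof -
  have "2 * (2 / (3 * d)) * (N\<^sup>2 * (2 / d ^ 3)) = 8/3 * (N / d\<^sup>2)\<^sup>2"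
    using spike_width_pos by (simp add: d_def field_simps power2_eq_square eval_nat_numeral)
  then have "sqrt (2 * (2 / (3 * d)) * (N\<^sup>2 * (2 / d ^ 3))) = sqrt (8/3) * \<bar>N / d\<^sup>2\<bar>"
    by (simp only: real_sqrt_mult real_sqrt_abs)
  then show ?thesis
    using N by simp
qed

lemma root_ln_grad_norm_bounds:
  defines "d \<equiv> spike_width N"
  shows "N \<le> root 4 (ln (sqrt (8/3) * N / d\<^sup>2))" "root 4 (ln (sqrt (8/3) * N / d\<^sup>2)) \<le> 2 * N"
proof -
  define q :: real where "q = sqrt (8/3)"
  have q: "1 \<le> q" "q \<le> 2"
    unfolding q_def by (simp_all add: real_le_rsqrt real_le_lsqrt)
  have "ln (q * N / d\<^sup>2) = ln q + ln N + 2 * N ^ 4 + 2 * ln 2"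
    using q N by (simp add: ln_div ln_mult ln_realpow d_def spike_width_def)
  moreover have "0 \<le> ln q" "ln q \<le> N ^ 4" "0 \<le> ln N"
    using q N le_fourth_power ln_le_minus_one[of q] by auto
  ultimately have "N ^ 4 \<le> ln (q * N / d\<^sup>2)" "ln (q * N / d\<^sup>2) \<le> (2 * N) ^ 4"
    using ln_le_fourth_power by (simp_all add: power_mult_distrib)
  then have "root 4 (N ^ 4) \<le> root 4 (ln (q * N / d\<^sup>2))" "root 4 (ln (q * N / d\<^sup>2)) \<le> root 4 ((2 * N) ^ 4)"
    by (simp_all only: real_root_le_mono zero_less_numeral)
  moreover have "root 4 (N ^ 4) = N" "root 4 ((2 * N) ^ 4) = 2 * N"
    by (rule real_root_power_cancel; use N in simp)+
  ultimately show "N \<le> root 4 (ln (sqrt (8/3) * N / d\<^sup>2))" "root 4 (ln (sqrt (8/3) * N / d\<^sup>2)) \<le> 2 * N"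
    unfolding q_def by linarith+
qed

lemma gradient_ratio_bounds:
  defines "d \<equiv> spike_width N"
  defines "A \<equiv> 2 / (3 * d)"
  defines "G \<equiv> sqrt (2 * A * (N\<^sup>2 * (2 / d ^ 3)))"
  shows "7/72 \<le> (sqrt (A\<^sup>2 - 1))\<^sup>2 * root 4 (ln G) / G"
    and "(sqrt (A\<^sup>2 - 1))\<^sup>2 * root 4 (ln G) / G \<le> 8/9"
proof -
  have d: "0 < d" "d < 1/2"
    using spike_width_pos spike_width_less_half by (simp_all add: d_def)
  define q :: real where "q = sqrt (8/3)"
  have q: "1 \<le> q" "q \<le> 2"
    unfolding q_def by (simp_all add: real_le_rsqrt real_le_lsqrt)
  have G: "G = q * N / d\<^sup>2"
    using grad_norm_spike_width by (simp add: G_def A_def q_def d_def)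
  define \<rho> where "\<rho> = root 4 (ln G) / N"
  have \<rho>: "1 \<le> \<rho>" "\<rho> \<le> 2"
    using root_ln_grad_norm_bounds N by (simp_all add: \<rho>_def G q_def d_def divide_le_eq le_divide_eq)
  define P where "P = 4/9 - d\<^sup>2"
  have "d\<^sup>2 \<le> 1/4"
    using power_mono[of d "1/2" 2] d by (simp add: power_divide)
  then have P: "7/36 \<le> P" "P \<le> 4/9"
    by (simp_all add: P_def)
  have "1 \<le> A"
    using d by (simp add: A_def field_simps)
  then have "(sqrt (A\<^sup>2 - 1))\<^sup>2 = A\<^sup>2 - 1"
    by simp
  then have ratio: "(sqrt (A\<^sup>2 - 1))\<^sup>2 * root 4 (ln G) / G = P * \<rho> / q"
    using d N q by (simp add: A_def G P_def \<rho>_def field_simps power2_eq_square)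
  have "7/36 * 1 \<le> P * \<rho>" "P * \<rho> \<le> 4/9 * 2"
    using P \<rho> by (intro mult_mono; simp)+
  moreover have "P * \<rho> / 2 \<le> P * \<rho> / q" "P * \<rho> / q \<le> P * \<rho> / 1"
    using P \<rho> q by (intro divide_left_mono; simp)+
  ultimately show "7/72 \<le> (sqrt (A\<^sup>2 - 1))\<^sup>2 * root 4 (ln G) / G"
    "(sqrt (A\<^sup>2 - 1))\<^sup>2 * root 4 (ln G) / G \<le> 8/9"
    unfolding ratio by linarith+
qed

end

lemma torusM_comb_tensor_le:
  assumes N: "0 < N" and r: "0 < r" "r < 1/2"
  shows "torusM (comb_tensor N (spike_width (real N))) r \<le> 25 / sqrt \<bar>ln r\<bar>"
  unfolding torusM_def
proof (rule cSUP_least)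
  fix p :: "real \<times> real"
  have N1: "1 \<le> real N" using N by simp
  have d: "0 < spike_width (real N)" "spike_width (real N) < 1/2"
    using spike_width_pos[OF N1] spike_width_less_half[OF N1] .
  have "(LINT y:ball p r|lborel. \<bar>comb_tensor N (spike_width (real N)) y\<bar>)
          \<le> (min (2 * r / spike_width (real N)) (2 * r + 2 / real N))\<^sup>2 + (2 * r)\<^sup>2"
    by (rule ball_integral_comb_tensor_le[OF N d r(1)])
  also have "\<dots> \<le> 25 / sqrt (- ln r)"
    using min_square_bound_mult_sqrt_neg_ln_le[OF N1 d(1) _ sqrt_ln_div_spike_width_le[OF N1] r] d r N1
    by (simp add: le_divide_eq)
  finally show "(LINT y:ball p r|lborel. \<bar>comb_tensor N (spike_width (real N)) y\<bar>) \<le> 25 / sqrt \<bar>ln r\<bar>"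
    using r by simp
qed simp

lemma liminf_limsup_ereal_between:
  fixes S :: "nat \<Rightarrow> real"
  assumes "0 < a" "\<And>n. a \<le> S n" "\<And>n. S n \<le> b"
  shows "0 < liminf (\<lambda>n. ereal (S n))" "limsup (\<lambda>n. ereal (S n)) < \<infinity>"
proof -
  have "ereal a \<le> liminf (\<lambda>n. ereal (S n))"
    by (rule Liminf_bounded) (simp add: assms(2))
  then show "0 < liminf (\<lambda>n. ereal (S n))"
    using assms(1) by (simp add: less_le_trans[rotated])
  have "limsup (\<lambda>n. ereal (S n)) \<le> ereal b"
    by (rule Limsup_bounded) (simp add: assms(3))
  then show "limsup (\<lambda>n. ereal (S n)) < \<infinity>"
    by (rule le_less_trans) simp
qed

theorem proposition2p5:
  shows "\<exists>(f :: nat \<Rightarrow> real \<times> real \<Rightarrow> real) (g :: nat \<Rightarrow> real \<times> real \<Rightarrow> real \<times> real) C B.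
     (\<forall>n. W1inf_torus (f n) (g n)) \<and>
     (\<forall>n. (LINT x:unit_square|lborel. f n x) = 0) \<and>
     (\<forall>n. torus_L1 (f n) \<le> B) \<and>
     C > 0 \<and>
     (\<forall>r \<in> {0<..<1/2}. (\<forall>n. torusM (f n) r \<le> C / sqrt \<bar>ln r\<bar>)) \<and>
     filterlim (\<lambda>n. torus_L2 (f n)) at_top sequentially \<and>
     (let S = (\<lambda>n. (torus_L2 (f n))\<^sup>2 * root 4 (ln (torus_grad_L2 (g n))) / torus_grad_L2 (g n))
      in 0 < liminf (\<lambda>n. ereal (S n)) \<and> limsup (\<lambda>n. ereal (S n)) < \<infinity>)"
proof -
  define f where "f n = comb_tensor (Suc n) (spike_width (Suc n))" for n
  define g where "g n = comb_tensor_grad (Suc n) (spike_width (Suc n))" for n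
  define S where "S n = (torus_L2 (f n))\<^sup>2 * root 4 (ln (torus_grad_L2 (g n))) / torus_grad_L2 (g n)" for n
  have N: "0 < Suc n" "1 \<le> real (Suc n)" for n
    by simp_all
  note d = spike_width_pos[OF N(2)] spike_width_less_half[OF N(2)]
  have L2: "torus_L2 (f n) = sqrt ((2 / (3 * spike_width (Suc n)))\<^sup>2 - 1)" for n
    unfolding f_def by (rule torus_L2_comb_tensor[OF N(1) d])
  have "real n \<le> torus_L2 (f n)" for n
    using L2_norm_growth[OF N(2)] by (simp add: L2)
  then have L2_unbounded: "filterlim (\<lambda>n. torus_L2 (f n)) at_top sequentially"
    by (intro filterlim_at_top_mono[OF filterlim_real_sequentially] always_eventually) simp
  have "7/72 \<le> S n" "S n \<le> 8/9" for n
    unfolding S_def L2 g_def torus_grad_L2_comb_tensor[OF N(1) d]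
    using gradient_ratio_bounds[OF N(2)] by blast+
  then have S_bounded: "0 < liminf (\<lambda>n. ereal (S n)) \<and> limsup (\<lambda>n. ereal (S n)) < \<infinity>"
    using liminf_limsup_ereal_between[of "7/72" S "8/9"] by simp
  have maximal_bound: "\<forall>r \<in> {0<..<1/2}. \<forall>n. torusM (f n) r \<le> 25 / sqrt \<bar>ln r\<bar>"
    unfolding f_def using torusM_comb_tensor_le[OF N(1)] by simp
  show ?thesis
    using W1inf_torus_comb_tensor[OF N(1) d] set_integral_comb_tensor[OF N(1) d]
      torus_L1_comb_tensor[OF N(1) d] maximal_bound L2_unbounded S_bounded
    by (intro exI[of _ f] exI[of _ g] exI[of _ 25] exI[of _ 2]) (simp add: f_def g_def S_def)
qed

end
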